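(* Let $\mathcal H=\mathcal H_A\otimes\mathcal H_B$ be finite-dimensional with $d=\dim\mathcal H$, local Hamiltonians $H_X(t_i)=\sum_{l_X}E^i_{l_X}\Pi^i_{l_X}$, $H_X(t_f)=\sum_{k_X}E^f_{k_X}\Pi^f_{k_X}$ ($X=A,B$), a CPTP map $\Phi$ on $\mathcal H$, $\beta>0$, local thermal states $\gamma^X_{\beta,i}=e^{-\beta H_X(t_i)}/\mathcal Z^X_{\beta,i}$, $\gamma^X_{\beta,f}=e^{-\beta H_X(t_f)}/\mathcal Z^X_{\beta,f}$, $\gamma_{\beta,i}=\gamma^A_{\beta,i}\otimes\gamma^B_{\beta,i}$, $\gamma_{\beta,f}=\gamma^A_{\beta,f}\otimes\gamma^B_{\beta,f}$, $\Delta F=-\beta^{-1}\ln\big(\mathcal Z^A_{\beta,f}\mathcal Z^B_{\beta,f}/(\mathcal Z^A_{\beta,i}\mathcal Z^B_{\beta,i})\big)$. Let the initial state have best separable approximation $\rho_i=\lambda\rho_{\mathcal E}+(1-\lambda)\rho_{\mathcal S}$ with $\rho_{\mathcal S}=\sum_j r_j\rho^A_j\otimes\rho^B_j$ ($r_j\ge0$, $\sum_jr_j=1$), and let each local state be decomposed as $\rho^X_j=(1-a^X_j)\gamma^X_{\beta,i}+a^X_j(1-c^X_j)\tau^X_{d_j}+a^X_jc^X_j\tau^X_{c_j}$ ($X=A,B$), where $a^X_j$ is the weight of athermality of $\rho^X_j$ w.r.t. $\gamma^X_{\beta,i}$ and $c^X_j,\tau^X_{d_j},\tau^X_{c_j}$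 come from the weight-of-coherence decomposition of the minimal athermal state in the eigenbasis of $H_X(t_i)$. Define $\rho_{d_j}=(1-a^A_j)a^B_j(1-c^B_j)\gamma^A_{\beta,i}\otimes\tau^B_{d_j}+a^A_j(1-c^A_j)(1-a^B_j)\tau^A_{d_j}\otimes\gamma^B_{\beta,i}+a^A_j(1-c^A_j)a^B_j(1-c^B_j)\tau^A_{d_j}\otimes\tau^B_{d_j}$ and $\rho_{c_j}=(1-a^A_j)a^B_jc^B_j\gamma^A_{\beta,i}\otimes\tau^B_{c_j}+a^A_jc^A_j(1-a^B_j)\tau^A_{c_j}\otimes\gamma^B_{\beta,i}+a^A_j(1-c^A_j)a^B_jc^B_j\tau^A_{d_j}\otimes\tau^B_{c_j}+a^A_jc^A_ja^B_j(1-c^B_j)\tau^A_{c_j}\otimes\tau^B_{d_j}+a^A_jc^A_ja^B_jc^B_j\tau^A_{c_j}\otimes\tau^B_{c_j}$. Then the bipartite EPM average satisfies $\langle e^{-\beta(\Delta E-\Delta F)}\rangle=\mathcal J^{(i)}\mathcal J^{(f)}$ with $$\mathcal J^{(i)}=\lambda\,\mathrm{Tr}(\gamma_{\beta,i}^{-1}\rho_{\mathcal E})+(1-\lambda)\sum_jr_j\Big((1-a^A_j)(1-a^B_j)d+\mathrm{Tr}(\gamma_{\beta,i}^{-1}\rho_{d_j})+\mathrm{Tr}(\gamma_{\beta,i}^{-1}\rho_{c_j})\Big),$$ $$\mathcal J^{(f)}=\lambda\,\mathrm{Tr}(\gamma_{\beta,f}\Phi[\rho_{\mathcal E}])+(1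-\lambda)\sum_jr_j\Big((1-a^A_j)(1-a^B_j)\mathrm{Tr}(\gamma_{\beta,f}\Phi[\gamma_{\beta,i}])+\mathrm{Tr}(\gamma_{\beta,f}\Phi[\rho_{d_j}])+\mathrm{Tr}(\gamma_{\beta,f}\Phi[\rho_{c_j}])\Big).$$
   Context: Bipartite EPM statistics: with $\mathbf l=(l_A,l_B)$, $\mathbf k=(k_A,k_B)$, $p^{\mathbf l,\mathbf k}=\mathrm{Tr}(\rho_i\,\Pi^i_{l_A}\otimes\Pi^i_{l_B})\mathrm{Tr}(\Phi[\rho_i]\,\Pi^f_{k_A}\otimes\Pi^f_{k_B})$, $\Delta E_{\mathbf l,\mathbf k}=E^f_{k_A}+E^f_{k_B}-E^i_{l_A}-E^i_{l_B}$, $\langle g(\Delta E)\rangle=\sum p^{\mathbf l,\mathbf k}g(\Delta E_{\mathbf l,\mathbf k})$. Best separable approximation (BSA): the decomposition $\rho=\lambda\rho_{\mathcal E}+(1-\lambda)\rho_{\mathcal S}$ with $\rho_{\mathcal E}$ a density operator, $\rho_{\mathcal S}$ separable, and $\lambda\in[0,1]$ minimal. Weight of athermality w.r.t. full-rank thermal $\gamma$: $\min\{a\ge0:\rho=(1-a)\gamma+a\tau,\ \tau\text{ a density operator}\}$, optimal $\tau$ the minimal athermal state. Weight of coherence w.r.t. a basis: $\min\{c\ge0:\tau=(1-c)\tau_d+c\tau_c,\ \tau_d\text{ diagonal},\ \tau_c\text{ a density operator}\}$. *)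

theory Defs
  imports "HOL-Analysis.Analysis"
begin

type_synonym 'n cmat = "complex^'n^'n"

definition adjm :: "'n::finite cmat \<Rightarrow> 'n cmat" where
  "adjm A = (\<chi> i j. cnj (A $ j $ i))"

definition psd :: "'n::finite cmat \<Rightarrow> bool" where
  "psd A \<longleftrightarrow> (\<forall>v::complex^'n.
     Im (\<Sum>i\<in>UNIV. cnj (v $ i) * (A *v v) $ i) = 0 \<and>
     0 \<le> Re (\<Sum>i\<in>UNIV. cnj (v $ i) * (A *v v) $ i))"

definition density :: "'n::finite cmat \<Rightarrow> bool" where
  "density A \<longleftrightarrow> psd A \<and> trace A = 1"

definition smat :: "complex \<Rightarrow> 'n::finite cmat \<Rightarrow> 'n cmat" where
  "smat c A = (\<chi> i j. c * A $ i $ j)"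

definition kron :: "'a::finite cmat \<Rightarrow> 'b::finite cmat \<Rightarrow> ('a \<times> 'b) cmat" where
  "kron A B = (\<chi> p q. A $ fst p $ fst q * B $ snd p $ snd q)"

definition unitary :: "'n::finite cmat \<Rightarrow> bool" where
  "unitary U \<longleftrightarrow> adjm U ** U = mat 1 \<and> U ** adjm U = mat 1"

definition diagonal :: "'n::finite cmat \<Rightarrow> bool" where
  "diagonal A \<longleftrightarrow> (\<forall>i j. i \<noteq> j \<longrightarrow> A $ i $ j = 0)"

text \<open>Diagonal with respect to the orthonormal basis given by the columns of U.\<close>
definition diagonal_in :: "'n::finite cmat \<Rightarrow> 'n cmat \<Rightarrow> bool" where
  "diagonal_in U A \<longleftrightarrow> diagonal (adjm U ** A ** U)"

definition spectral_decomp :: "nat \<Rightarrow> (nat \<Rightarrow> real) \<Rightarrow> (nat \<Rightarrow> 'n::finite cmat) \<Rightarrow> bool" where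
  "spectral_decomp n E P \<longleftrightarrow>
     inj_on E {..<n} \<and>
     (\<forall>l<n. P l \<noteq> 0 \<and> adjm (P l) = P l) \<and>
     (\<forall>l<n. \<forall>m<n. P l ** P m = (if l = m then P l else 0)) \<and>
     (\<Sum>l<n. P l) = mat 1"

definition hamiltonian :: "nat \<Rightarrow> (nat \<Rightarrow> real) \<Rightarrow> (nat \<Rightarrow> 'n::finite cmat) \<Rightarrow> 'n cmat" where
  "hamiltonian n E P = (\<Sum>l<n. smat (complex_of_real (E l)) (P l))"

text \<open>\<open>e^{-\<beta> H}\<close> for \<open>H = \<Sum> E l \<Pi> l\<close>, via the spectral calculus
  (the matrix exponential of a Hermitian matrix in spectral form).\<close>
definition boltz :: "real \<Rightarrow> nat \<Rightarrow> (nat \<Rightarrow> real) \<Rightarrow> (nat \<Rightarrow> 'n::finite cmat) \<Rightarrow> 'n cmat" where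
  "boltz \<beta> n E P = (\<Sum>l<n. smat (complex_of_real (exp (- \<beta> * E l))) (P l))"

definition partition :: "real \<Rightarrow> nat \<Rightarrow> (nat \<Rightarrow> real) \<Rightarrow> (nat \<Rightarrow> 'n::finite cmat) \<Rightarrow> real" where
  "partition \<beta> n E P = Re (trace (boltz \<beta> n E P))"

definition gibbs :: "real \<Rightarrow> nat \<Rightarrow> (nat \<Rightarrow> real) \<Rightarrow> (nat \<Rightarrow> 'n::finite cmat) \<Rightarrow> 'n cmat" where
  "gibbs \<beta> n E P = smat (complex_of_real (1 / partition \<beta> n E P)) (boltz \<beta> n E P)"

definition cptp :: "('n::finite cmat \<Rightarrow> 'n cmat) \<Rightarrow> bool" where
  "cptp \<Phi> \<longleftrightarrow> (\<exists>(m::nat) (K :: nat \<Rightarrow> 'n cmat).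
      (\<forall>\<rho>. \<Phi> \<rho> = (\<Sum>k<m. K k ** \<rho> ** adjm (K k))) \<and>
      (\<Sum>k<m. adjm (K k) ** K k) = mat 1)"

definition separable :: "('a::finite \<times> 'b::finite) cmat \<Rightarrow> bool" where
  "separable \<sigma> \<longleftrightarrow> (\<exists>(m::nat) (r :: nat \<Rightarrow> real) (\<rho>A :: nat \<Rightarrow> 'a cmat) (\<rho>B :: nat \<Rightarrow> 'b cmat).
      (\<forall>j<m. 0 \<le> r j \<and> density (\<rho>A j) \<and> density (\<rho>B j)) \<and> (\<Sum>j<m. r j) = 1 \<and>
      \<sigma> = (\<Sum>j<m. r j *\<^sub>R kron (\<rho>A j) (\<rho>B j)))"

definition is_BSA :: "('a::finite \<times> 'b::finite) cmat \<Rightarrow> real \<Rightarrow> ('a \<times> 'b) cmat \<Rightarrow> ('a \<times> 'b) cmat \<Rightarrow> bool" where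
  "is_BSA \<rho> lam \<rho>E \<rho>S \<longleftrightarrow>
     0 \<le> lam \<and> lam \<le> 1 \<and> density \<rho>E \<and> separable \<rho>S \<and> \<rho> = lam *\<^sub>R \<rho>E + (1 - lam) *\<^sub>R \<rho>S \<and>
     (\<forall>lam' \<rho>E' \<rho>S'. 0 \<le> lam' \<and> lam' \<le> 1 \<and> density \<rho>E' \<and> separable \<rho>S' \<and>
        \<rho> = lam' *\<^sub>R \<rho>E' + (1 - lam') *\<^sub>R \<rho>S' \<longrightarrow> lam \<le> lam')"

definition weight_athermality :: "'n::finite cmat \<Rightarrow> 'n cmat \<Rightarrow> real \<Rightarrow> 'n cmat \<Rightarrow> bool" where
  "weight_athermality \<gamma> \<rho> a \<tau> \<longleftrightarrow>
     0 \<le> a \<and> density \<tau> \<and> \<rho> = (1 - a) *\<^sub>R \<gamma> + a *\<^sub>R \<tau> \<and>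
     (\<forall>a' \<tau>'. 0 \<le> a' \<and> density \<tau>' \<and> \<rho> = (1 - a') *\<^sub>R \<gamma> + a' *\<^sub>R \<tau>' \<longrightarrow> a \<le> a')"

definition weight_coherence :: "'n::finite cmat \<Rightarrow> 'n cmat \<Rightarrow> real \<Rightarrow> 'n cmat \<Rightarrow> 'n cmat \<Rightarrow> bool" where
  "weight_coherence U \<tau> c \<tau>d \<tau>c \<longleftrightarrow>
     0 \<le> c \<and> density \<tau>d \<and> diagonal_in U \<tau>d \<and> density \<tau>c \<and>
     \<tau> = (1 - c) *\<^sub>R \<tau>d + c *\<^sub>R \<tau>c \<and>
     (\<forall>c' \<tau>d' \<tau>c'. 0 \<le> c' \<and> density \<tau>d' \<and> diagonal_in U \<tau>d' \<and> density \<tau>c' \<and>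
        \<tau> = (1 - c') *\<^sub>R \<tau>d' + c' *\<^sub>R \<tau>c' \<longrightarrow> c \<le> c')"

definition eigenbasis :: "'n::finite cmat \<Rightarrow> nat \<Rightarrow> (nat \<Rightarrow> 'n cmat) \<Rightarrow> bool" where
  "eigenbasis U n P \<longleftrightarrow> unitary U \<and> (\<forall>l<n. diagonal_in U (P l))"

definition epm_avg ::
  "('a::finite \<times> 'b::finite) cmat \<Rightarrow> (('a \<times> 'b) cmat \<Rightarrow> ('a \<times> 'b) cmat) \<Rightarrow>
   nat \<Rightarrow> (nat \<Rightarrow> real) \<Rightarrow> (nat \<Rightarrow> 'a cmat) \<Rightarrow> nat \<Rightarrow> (nat \<Rightarrow> real) \<Rightarrow> (nat \<Rightarrow> 'b cmat) \<Rightarrow>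
   nat \<Rightarrow> (nat \<Rightarrow> real) \<Rightarrow> (nat \<Rightarrow> 'a cmat) \<Rightarrow> nat \<Rightarrow> (nat \<Rightarrow> real) \<Rightarrow> (nat \<Rightarrow> 'b cmat) \<Rightarrow>
   (real \<Rightarrow> real) \<Rightarrow> complex" where
  "epm_avg \<rho> \<Phi> nAi EAi PAi nBi EBi PBi nAf EAf PAf nBf EBf PBf g =
     (\<Sum>lA<nAi. \<Sum>lB<nBi. \<Sum>kA<nAf. \<Sum>kB<nBf.
        trace (\<rho> ** kron (PAi lA) (PBi lB)) * trace (\<Phi> \<rho> ** kron (PAf kA) (PBf kB)) *
        complex_of_real (g (EAf kA + EBf kB - EAi lA - EBi lB)))"

end

theory Submission
  imports Defs
begin

text \<open>
  In the spectral decompositions, exp(-\<beta>(\<Delta>E - \<Delta>F)) is, for each subsystem, the product of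
  a factor exp(\<beta> E_i) Z_i of the initial outcome and a factor exp(-\<beta> E_f) / Z_f of the final
  one.  Summed against the projectors these become the spectral forms of the inverse initial
  and of the final Gibbs state, so the EPM average equals Tr(\<gamma>_i^-1 \<rho>_i) Tr(\<gamma>_f \<Phi>[\<rho>_i]).
  Both factors are linear in \<rho>_i, so they are evaluated term by term on the BSA, on the
  separable ensemble and on the expansion of each product state into thermal, incoherent and
  coherent parts; the thermal term of the first factor is Tr(\<gamma>_i^-1 \<gamma>_i) = d.  Only these
  convex decompositions enter, not the optimality of \<lambda>, of the weights of athermality or of
  the weights of coherence.
\<close>

lemma matrix_sum_ldistrib: "(B::'a::semiring_1^'n^'m) ** (\<Sum>l\<in>L. f l) = (\<Sum>l\<in>L. B ** f l)"
  by (simp add: vec_eq_iff matrix_matrix_mult_def sum_distrib_left sum_component) (intro allI sum.swap)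

lemma matrix_sum_rdistrib: "(\<Sum>l\<in>L. f l) ** (B::'a::semiring_1^'p^'n) = (\<Sum>l\<in>L. f l ** B)"
  by (simp add: vec_eq_iff matrix_matrix_mult_def sum_distrib_right sum_component) (intro allI sum.swap)

lemma matrix_add_rdistrib: "(A + B) ** C = A ** C + B ** (C::'a::semiring_1^'p^'n)"
  by (vector matrix_matrix_mult_def sum.distrib[symmetric] field_simps)

lemma smat_matrix_mul: "smat a A ** smat b (B::'n::finite cmat) = smat (a * b) (A ** B)"
  by (simp add: vec_eq_iff matrix_matrix_mult_def smat_def sum_distrib_left mult_ac)

lemma matrix_mul_smat: "M ** smat c (A::'n::finite cmat) = smat c (M ** A)"
  by (simp add: vec_eq_iff matrix_matrix_mult_def smat_def sum_distrib_left mult_ac)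

lemma smat_sum: "smat c (\<Sum>l\<in>L. f l) = (\<Sum>l\<in>L. smat c (f l :: 'n::finite cmat))"
  by (simp add: vec_eq_iff smat_def sum_distrib_left)

lemma smat_smat: "smat c (smat d A) = smat (c * d) (A :: 'n::finite cmat)"
  by (simp add: vec_eq_iff smat_def mult_ac)

lemma smat_0 [simp]: "smat c (0 :: 'n::finite cmat) = 0"
  by (simp add: vec_eq_iff smat_def)

lemma smat_1 [simp]: "smat 1 (A :: 'n::finite cmat) = A"
  by (simp add: vec_eq_iff smat_def)

lemma trace_sum: "trace (\<Sum>l\<in>L. f l) = (\<Sum>l\<in>L. trace (f l :: 'a::semiring_1^'n^'n))"
  by (simp add: trace_def) (rule sum.swap)

lemma trace_smat: "trace (smat c (A::'n::finite cmat)) = c * trace A"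
  by (simp add: trace_def smat_def sum_distrib_left)

lemma linear_trace_matrix_mul: "linear (\<lambda>X. trace (M ** (X::'a::{real_algebra_1,comm_ring_1}^'n^'n)))"
proof (rule linearI)
  show "trace (M ** (c *\<^sub>R X)) = c *\<^sub>R trace (M ** X)" for c X
    by (simp add: matrix_scalar_ac scalar_matrix_assoc[symmetric] trace_def scaleR_sum_right)
qed (simp add: trace_add matrix_add_ldistrib)

lemma kron_sum_left: "kron (\<Sum>l\<in>L. f l) B = (\<Sum>l\<in>L. kron (f l) B)"
  by (simp add: vec_eq_iff kron_def sum_distrib_right)

lemma kron_sum_right: "kron A (\<Sum>l\<in>L. f l) = (\<Sum>l\<in>L. kron A (f l))"
  by (simp add: vec_eq_iff kron_def sum_distrib_left)

lemma kron_smat: "kron (smat a A) (smat b B) = smat (a * b) (kron A B)"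
  by (simp add: vec_eq_iff kron_def smat_def mult_ac)

lemma kron_matrix_mul: "kron A B ** kron C D = kron (A ** C) (B ** D)"
proof -
  have "(kron A B ** kron C D) $ p $ q =
      (\<Sum>r\<in>UNIV \<times> UNIV. A $ fst p $ fst r * C $ fst r $ fst q * (B $ snd p $ snd r * D $ snd r $ snd q))"
    for p q by (simp add: matrix_matrix_mult_def kron_def mult_ac UNIV_Times_UNIV)
  then show ?thesis
    by (simp add: vec_eq_iff matrix_matrix_mult_def kron_def sum_product sum.cartesian_product case_prod_beta)
qed

lemma kron_mat_1: "kron (mat 1 :: 'a::finite cmat) (mat 1 :: 'b::finite cmat) = mat 1"
  by (auto simp add: vec_eq_iff kron_def mat_def prod_eq_iff)

lemma matrix_inv_eqI:
  assumes "A ** B = mat 1" "B ** (A::'a::semiring_1^'n^'m) = mat 1"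
  shows "matrix_inv A = B"
proof -
  have "A ** matrix_inv A = mat 1 \<and> matrix_inv A ** A = mat 1"
    unfolding matrix_inv_def by (rule someI[of _ B]) (use assms in blast)
  then have "matrix_inv A = matrix_inv A ** (A ** B)"
    using assms by simp
  also have "\<dots> = B"
    using \<open>A ** matrix_inv A = mat 1 \<and> matrix_inv A ** A = mat 1\<close> by (simp add: matrix_mul_assoc)
  finally show ?thesis .
qed

lemma invertible_kron:
  assumes "invertible A" "invertible B"
  shows "invertible (kron A B)"
proof -
  obtain A' B' where "A ** A' = mat 1" "A' ** A = mat 1" "B ** B' = mat 1" "B' ** B = mat 1"
    using assms unfolding invertible_def by blast
  then show ?thesis
    unfolding invertible_def by (metis kron_matrix_mul kron_mat_1)
qed

lemma matrix_inv_kron: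
  assumes "A ** A' = mat 1" "A' ** A = mat 1" "B ** B' = mat 1" "B' ** B = mat 1"
  shows "matrix_inv (kron A B) = kron A' B'"
  by (rule matrix_inv_eqI) (simp_all add: kron_matrix_mul assms kron_mat_1)

lemma trace_matrix_inv_mult:
  assumes "invertible (A::'a::semiring_1^'n^'n)"
  shows "trace (matrix_inv A ** A) = of_nat CARD('n)"
proof -
  have "A ** matrix_inv A = mat 1 \<and> matrix_inv A ** A = mat 1"
    using assms unfolding invertible_def matrix_inv_def by (rule someI_ex)
  then show ?thesis by (simp add: trace_I)
qed

lemma spectral_decomp_nonempty:
  assumes "spectral_decomp n E (P :: nat \<Rightarrow> 'n::finite cmat)"
  shows "0 < n"
proof (rule ccontr)
  assume "\<not> 0 < n"
  then have "(mat 1 :: 'n cmat) = 0"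
    using assms by (simp add: spectral_decomp_def)
  then have "(mat 1 :: 'n cmat) $ undefined $ undefined = 0" by simp
  then show False by (simp add: mat_def)
qed

lemma trace_projection_pos:
  assumes "P \<noteq> 0" "adjm P ** P = (P::'n::finite cmat)"
  shows "0 < Re (trace P)"
proof -
  obtain i0 k0 where "P $ k0 $ i0 \<noteq> 0"
    using assms(1) by (auto simp: vec_eq_iff)
  have "trace P = (\<Sum>i\<in>UNIV. \<Sum>k\<in>UNIV. cnj (P $ k $ i) * P $ k $ i)"
    by (subst assms(2)[symmetric]) (simp add: trace_def matrix_matrix_mult_def adjm_def)
  then have "Re (trace P) = (\<Sum>i\<in>UNIV. \<Sum>k\<in>UNIV. (cmod (P $ k $ i))\<^sup>2)"
    by (simp add: mult.commute[of "cnj _"] complex_mult_cnj cmod_power2)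
  moreover have "0 < (\<Sum>k\<in>UNIV. (cmod (P $ k $ i0))\<^sup>2)"
    by (rule sum_pos2[of UNIV k0]) (use \<open>P $ k0 $ i0 \<noteq> 0\<close> in auto)
  moreover have "\<dots> \<le> (\<Sum>i\<in>UNIV. \<Sum>k\<in>UNIV. (cmod (P $ k $ i))\<^sup>2)"
    by (rule member_le_sum) (auto intro: sum_nonneg)
  ultimately show ?thesis by linarith
qed

lemma partition_pos:
  assumes "spectral_decomp n E (P :: nat \<Rightarrow> 'n::finite cmat)"
  shows "0 < partition \<beta> n E P"
proof -
  have "partition \<beta> n E P = (\<Sum>l<n. exp (- \<beta> * E l) * Re (trace (P l)))"
    by (simp add: partition_def boltz_def trace_sum trace_smat)
  also have "\<dots> > 0"
  proof (rule sum_pos)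
    show "{..<n} \<noteq> {}"
      using spectral_decomp_nonempty[OF assms] by auto
    fix l assume "l \<in> {..<n}"
    then have "0 < Re (trace (P l))"
      using assms unfolding spectral_decomp_def by (intro trace_projection_pos) auto
    then show "0 < exp (- \<beta> * E l) * Re (trace (P l))" by simp
  qed simp
  finally show ?thesis .
qed

lemma spectral_sum_mult:
  assumes "spectral_decomp n E (P :: nat \<Rightarrow> 'n::finite cmat)"
  shows "(\<Sum>l<n. smat (a l) (P l)) ** (\<Sum>l<n. smat (b l) (P l)) = (\<Sum>l<n. smat (a l * b l) (P l))"
proof -
  have "(\<Sum>l<n. smat (a l) (P l)) ** (\<Sum>l<n. smat (b l) (P l)) =
      (\<Sum>l<n. \<Sum>k<n. smat (a l * b k) (P l ** P k))"
    by (simp add: matrix_sum_ldistrib matrix_sum_rdistrib smat_matrix_mul) (rule sum.swap)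
  also have "\<dots> = (\<Sum>l<n. \<Sum>k<n. if k = l then smat (a l * b l) (P l) else 0)"
    using assms unfolding spectral_decomp_def by (intro sum.cong refl) auto
  finally show ?thesis by simp
qed

lemma gibbs_spectral:
  "gibbs \<beta> n E P = (\<Sum>l<n. smat (of_real (exp (- \<beta> * E l) / partition \<beta> n E P)) (P l))"
  by (simp add: gibbs_def boltz_def smat_sum smat_smat)

lemma gibbs_inverse:
  fixes \<beta> :: real
  assumes "spectral_decomp n E (P :: nat \<Rightarrow> 'n::finite cmat)"
  defines "G \<equiv> \<Sum>l<n. smat (of_real (exp (\<beta> * E l) * partition \<beta> n E P)) (P l)"
  shows "gibbs \<beta> n E P ** G = mat 1" "G ** gibbs \<beta> n E P = mat 1"
proof -
  have "partition \<beta> n E P \<noteq> 0"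
    using partition_pos[OF assms(1)] by (metis less_irrefl)
  then have "of_real (exp (- \<beta> * E l) / partition \<beta> n E P) *
      of_real (exp (\<beta> * E l) * partition \<beta> n E P) = (1::complex)" for l
    by (simp flip: of_real_mult add: exp_minus field_simps)
  then have "(\<Sum>l<n. smat (of_real (exp (- \<beta> * E l) / partition \<beta> n E P) *
      of_real (exp (\<beta> * E l) * partition \<beta> n E P)) (P l)) = mat 1"
    using assms(1) unfolding spectral_decomp_def by simp
  then show "gibbs \<beta> n E P ** G = mat 1" "G ** gibbs \<beta> n E P = mat 1"
    unfolding G_def gibbs_spectral spectral_sum_mult[OF assms(1)] by (simp_all add: mult.commute)
qed

lemma invertible_gibbs:
  assumes "spectral_decomp n E (P :: nat \<Rightarrow> 'n::finite cmat)"
  shows "invertible (gibbs \<beta> n E P)"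
  using gibbs_inverse[OF assms] unfolding invertible_def by blast

lemma cptp_linear:
  assumes "cptp \<Phi>"
  shows "linear \<Phi>"
proof -
  obtain m :: nat and K where K: "\<And>X. \<Phi> X = (\<Sum>k<m. K k ** X ** adjm (K k))"
    using assms unfolding cptp_def by blast
  show ?thesis
    by (rule linearI) (simp_all add: K matrix_add_ldistrib matrix_add_rdistrib sum.distrib
        matrix_scalar_ac scalar_matrix_assoc scaleR_sum_right)
qed

lemma trace_kron_spectral:
  "trace (M ** kron (\<Sum>l<n. smat (a l) (PA l)) (\<Sum>k<n'. smat (b k) (PB k))) =
   (\<Sum>l<n. \<Sum>k<n'. trace (M ** kron (PA l) (PB k)) * a l * b k)"
  by (simp add: kron_sum_left kron_sum_right kron_smat matrix_sum_ldistrib matrix_mul_smat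
      trace_sum trace_smat mult_ac)
    (rule sum.swap)

lemma exp_work_minus_free_energy:
  fixes \<beta> :: real
  assumes "\<beta> \<noteq> 0" "0 < ZAi" "0 < ZBi" "0 < ZAf" "0 < ZBf"
  shows "exp (- \<beta> * (eAf + eBf - eAi - eBi - (- (1 / \<beta>) * ln (ZAf * ZBf / (ZAi * ZBi))))) =
    (exp (\<beta> * eAi) * ZAi) * (exp (\<beta> * eBi) * ZBi) * (exp (- \<beta> * eAf) / ZAf) * (exp (- \<beta> * eBf) / ZBf)"
proof -
  have ratio_pos: "0 < ZAf * ZBf / (ZAi * ZBi)"
    using assms by simp
  have "- \<beta> * (eAf + eBf - eAi - eBi - (- (1 / \<beta>) * ln (ZAf * ZBf / (ZAi * ZBi)))) =
      \<beta> * eAi + \<beta> * eBi + - \<beta> * eAf + - \<beta> * eBf - ln (ZAf * ZBf / (ZAi * ZBi))"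
    using assms(1) by (simp add: field_simps)
  then show ?thesis
    using assms by (simp only: exp_add exp_diff exp_ln[OF ratio_pos]) (simp add: field_simps)
qed

lemma epm_avg_exp_free_energy:
  fixes \<beta> :: real and PAi PAf :: "nat \<Rightarrow> 'a::finite cmat" and PBi PBf :: "nat \<Rightarrow> 'b::finite cmat"
  assumes "\<beta> \<noteq> 0"
    and specAi: "spectral_decomp nAi EAi PAi" and specBi: "spectral_decomp nBi EBi PBi"
    and specAf: "spectral_decomp nAf EAf PAf" and specBf: "spectral_decomp nBf EBf PBf"
  shows "epm_avg \<rho> \<Phi> nAi EAi PAi nBi EBi PBi nAf EAf PAf nBf EBf PBf
      (\<lambda>x. exp (- \<beta> * (x - (- (1 / \<beta>) * ln (partition \<beta> nAf EAf PAf * partition \<beta> nBf EBf PBf /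
                                    (partition \<beta> nAi EAi PAi * partition \<beta> nBi EBi PBi))))))
    = trace (matrix_inv (kron (gibbs \<beta> nAi EAi PAi) (gibbs \<beta> nBi EBi PBi)) ** \<rho>) *
      trace (kron (gibbs \<beta> nAf EAf PAf) (gibbs \<beta> nBf EBf PBf) ** \<Phi> \<rho>)"
proof -
  let ?ZAi = "partition \<beta> nAi EAi PAi" and ?ZBi = "partition \<beta> nBi EBi PBi"
  let ?ZAf = "partition \<beta> nAf EAf PAf" and ?ZBf = "partition \<beta> nBf EBf PBf"
  let ?wAi = "\<lambda>l. complex_of_real (exp (\<beta> * EAi l) * ?ZAi)"
  let ?wBi = "\<lambda>l. complex_of_real (exp (\<beta> * EBi l) * ?ZBi)"
  let ?wAf = "\<lambda>k. complex_of_real (exp (- \<beta> * EAf k) / ?ZAf)"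
  let ?wBf = "\<lambda>k. complex_of_real (exp (- \<beta> * EBf k) / ?ZBf)"
  let ?tI = "\<lambda>lA lB. trace (\<rho> ** kron (PAi lA) (PBi lB))"
  let ?tF = "\<lambda>kA kB. trace (\<Phi> \<rho> ** kron (PAf kA) (PBf kB))"
  have inverse: "matrix_inv (kron (gibbs \<beta> nAi EAi PAi) (gibbs \<beta> nBi EBi PBi)) =
      kron (\<Sum>l<nAi. smat (?wAi l) (PAi l)) (\<Sum>l<nBi. smat (?wBi l) (PBi l))"
    by (rule matrix_inv_kron) (rule gibbs_inverse specAi specBi)+
  have "epm_avg \<rho> \<Phi> nAi EAi PAi nBi EBi PBi nAf EAf PAf nBf EBf PBf
      (\<lambda>x. exp (- \<beta> * (x - (- (1 / \<beta>) * ln (?ZAf * ?ZBf / (?ZAi * ?ZBi)))))) =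
    (\<Sum>lA<nAi. \<Sum>lB<nBi. \<Sum>kA<nAf. \<Sum>kB<nBf.
      (?tI lA lB * ?wAi lA * ?wBi lB) * (?tF kA kB * ?wAf kA * ?wBf kB))"
    unfolding epm_avg_def exp_work_minus_free_energy[OF assms(1) partition_pos[OF specAi]
        partition_pos[OF specBi] partition_pos[OF specAf] partition_pos[OF specBf]]
    by (simp only: of_real_mult mult_ac)
  also have "\<dots> = (\<Sum>lA<nAi. \<Sum>lB<nBi. ?tI lA lB * ?wAi lA * ?wBi lB) *
                 (\<Sum>kA<nAf. \<Sum>kB<nBf. ?tF kA kB * ?wAf kA * ?wBf kB)"
    unfolding sum_distrib_right unfolding sum_distrib_left ..
  also have "\<dots> = trace (\<rho> ** kron (\<Sum>l<nAi. smat (?wAi l) (PAi l)) (\<Sum>l<nBi. smat (?wBi l) (PBi l))) *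
      trace (\<Phi> \<rho> ** kron (gibbs \<beta> nAf EAf PAf) (gibbs \<beta> nBf EBf PBf))"
    unfolding gibbs_spectral trace_kron_spectral ..
  also have "\<dots> = trace (matrix_inv (kron (gibbs \<beta> nAi EAi PAi) (gibbs \<beta> nBi EBi PBi)) ** \<rho>) *
      trace (kron (gibbs \<beta> nAf EAf PAf) (gibbs \<beta> nBf EBf PBf) ** \<Phi> \<rho>)"
    unfolding inverse by (simp only: trace_mul_sym[of \<rho>] trace_mul_sym[of "\<Phi> \<rho>"])
  finally show ?thesis .
qed

lemma kron_mixture_expand:
  fixes \<gamma>A \<tau>Ad \<tau>Ac :: "'a::finite cmat" and \<gamma>B \<tau>Bd \<tau>Bc :: "'b::finite cmat"
  assumes "\<rho>A = (1 - aA) *\<^sub>R \<gamma>A + aA *\<^sub>R \<tau>A" "\<tau>A = (1 - cA) *\<^sub>R \<tau>Ad + cA *\<^sub>R \<tau>Ac"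
    and "\<rho>B = (1 - aB) *\<^sub>R \<gamma>B + aB *\<^sub>R \<tau>B" "\<tau>B = (1 - cB) *\<^sub>R \<tau>Bd + cB *\<^sub>R \<tau>Bc"
  shows "kron \<rho>A \<rho>B = ((1 - aA) * (1 - aB)) *\<^sub>R kron \<gamma>A \<gamma>B
    + (((1 - aA) * aB * (1 - cB)) *\<^sub>R kron \<gamma>A \<tau>Bd
       + (aA * (1 - cA) * (1 - aB)) *\<^sub>R kron \<tau>Ad \<gamma>B
       + (aA * (1 - cA) * aB * (1 - cB)) *\<^sub>R kron \<tau>Ad \<tau>Bd)
    + (((1 - aA) * aB * cB) *\<^sub>R kron \<gamma>A \<tau>Bc
       + (aA * cA * (1 - aB)) *\<^sub>R kron \<tau>Ac \<gamma>B
       + (aA * (1 - cA) * aB * cB) *\<^sub>R kron \<tau>Ad \<tau>Bc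
       + (aA * cA * aB * (1 - cB)) *\<^sub>R kron \<tau>Ac \<tau>Bd
       + (aA * cA * aB * cB) *\<^sub>R kron \<tau>Ac \<tau>Bc)"
  unfolding assms by (simp add: vec_eq_iff kron_def algebra_simps)

lemma linear_mixture_expand:
  fixes f :: "'v::real_vector \<Rightarrow> complex"
  assumes "linear f"
    and mixture: "\<rho> = lam *\<^sub>R \<rho>E + (1 - lam) *\<^sub>R (\<Sum>j<m. r j *\<^sub>R \<sigma> j)"
    and split: "\<And>j. j < m \<Longrightarrow> \<sigma> j = w j *\<^sub>R \<gamma> + \<rho>d j + \<rho>c j"
  shows "f \<rho> = of_real lam * f \<rho>E + of_real (1 - lam) *
    (\<Sum>j<m. of_real (r j) * (of_real (w j) * f \<gamma> + f (\<rho>d j) + f (\<rho>c j)))"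
proof -
  have "f \<rho> = lam *\<^sub>R f \<rho>E + (1 - lam) *\<^sub>R (\<Sum>j<m. r j *\<^sub>R f (\<sigma> j))"
    unfolding mixture linear_add[OF assms(1)] linear_scale[OF assms(1)] linear_sum[OF assms(1)] ..
  also have "(\<Sum>j<m. r j *\<^sub>R f (\<sigma> j)) =
      (\<Sum>j<m. of_real (r j) * (of_real (w j) * f \<gamma> + f (\<rho>d j) + f (\<rho>c j)))"
    by (rule sum.cong)
      (simp_all add: split linear_add[OF assms(1)] linear_scale[OF assms(1)] scaleR_conv_of_real)
  finally show ?thesis by (simp add: scaleR_conv_of_real)
qed

lemma epm_avg_exp_mixture:
  fixes \<beta> :: real and nAi nBi nAf nBf :: nat and EAi EBi EAf EBf :: "nat \<Rightarrow> real"
    and PAi PAf :: "nat \<Rightarrow> 'a::finite cmat" and PBi PBf :: "nat \<Rightarrow> 'b::finite cmat"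
  defines "\<gamma>i \<equiv> kron (gibbs \<beta> nAi EAi PAi) (gibbs \<beta> nBi EBi PBi)"
    and "\<gamma>f \<equiv> kron (gibbs \<beta> nAf EAf PAf) (gibbs \<beta> nBf EBf PBf)"
  assumes beta: "\<beta> \<noteq> 0"
    and specAi: "spectral_decomp nAi EAi PAi" and specBi: "spectral_decomp nBi EBi PBi"
    and specAf: "spectral_decomp nAf EAf PAf" and specBf: "spectral_decomp nBf EBf PBf"
    and "linear \<Phi>"
    and mixture: "\<rho> = lam *\<^sub>R \<rho>E + (1 - lam) *\<^sub>R (\<Sum>j<m. r j *\<^sub>R \<sigma> j)"
    and split: "\<And>j. j < m \<Longrightarrow> \<sigma> j = w j *\<^sub>R \<gamma>i + \<rho>d j + \<rho>c j"
  shows "epm_avg \<rho> \<Phi> nAi EAi PAi nBi EBi PBi nAf EAf PAf nBf EBf PBf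
      (\<lambda>x. exp (- \<beta> * (x - (- (1 / \<beta>) * ln (partition \<beta> nAf EAf PAf * partition \<beta> nBf EBf PBf /
                                    (partition \<beta> nAi EAi PAi * partition \<beta> nBi EBi PBi))))))
    = (of_real lam * trace (matrix_inv \<gamma>i ** \<rho>E) + of_real (1 - lam) *
        (\<Sum>j<m. of_real (r j) * (of_real (w j * real CARD('a \<times> 'b))
           + trace (matrix_inv \<gamma>i ** \<rho>d j) + trace (matrix_inv \<gamma>i ** \<rho>c j)))) *
      (of_real lam * trace (\<gamma>f ** \<Phi> \<rho>E) + of_real (1 - lam) *
        (\<Sum>j<m. of_real (r j) * (of_real (w j) * trace (\<gamma>f ** \<Phi> \<gamma>i)
           + trace (\<gamma>f ** \<Phi> (\<rho>d j)) + trace (\<gamma>f ** \<Phi> (\<rho>c j)))))"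
proof -
  have "invertible \<gamma>i"
    unfolding \<gamma>i_def by (intro invertible_kron invertible_gibbs specAi specBi)
  then have dim: "trace (matrix_inv \<gamma>i ** \<gamma>i) = of_real (real CARD('a \<times> 'b))"
    by (simp add: trace_matrix_inv_mult)
  have "linear (\<lambda>X. trace (\<gamma>f ** \<Phi> X))"
    using linear_compose[OF \<open>linear \<Phi>\<close> linear_trace_matrix_mul] by (simp add: o_def)
  note final = linear_mixture_expand[OF this mixture split]
  note initial = linear_mixture_expand[OF linear_trace_matrix_mul mixture split]
  show ?thesis
    unfolding epm_avg_exp_free_energy[OF beta specAi specBi specAf specBf, folded \<gamma>i_def \<gamma>f_def]
    using initial final dim by simp
qed

theorem mainTheorem7:
  fixes \<beta> :: real
    and nAi nBi nAf nBf :: nat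
    and EAi EBi EAf EBf :: "nat \<Rightarrow> real"
    and PAi PAf :: "nat \<Rightarrow> 'a::finite cmat"
    and PBi PBf :: "nat \<Rightarrow> 'b::finite cmat"
    and UA :: "'a cmat" and UB :: "'b cmat"
    and \<Phi> :: "('a \<times> 'b) cmat \<Rightarrow> ('a \<times> 'b) cmat"
    and \<rho>i \<rho>E \<rho>S :: "('a \<times> 'b) cmat" and lam :: real
    and m :: nat and r :: "nat \<Rightarrow> real"
    and \<rho>A \<tau>A \<tau>Ad \<tau>Ac :: "nat \<Rightarrow> 'a cmat" and aA cA :: "nat \<Rightarrow> real"
    and \<rho>B \<tau>B \<tau>Bd \<tau>Bc :: "nat \<Rightarrow> 'b cmat" and aB cB :: "nat \<Rightarrow> real"
  assumes beta_pos: "0 < \<beta>"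
    and specAi: "spectral_decomp nAi EAi PAi" and specBi: "spectral_decomp nBi EBi PBi"
    and specAf: "spectral_decomp nAf EAf PAf" and specBf: "spectral_decomp nBf EBf PBf"
    and channel: "cptp \<Phi>"
    and init_state: "density \<rho>i"
    and BSA: "is_BSA \<rho>i lam \<rho>E \<rho>S"
    and sep_decomp: "(\<forall>j<m. 0 \<le> r j \<and> density (\<rho>A j) \<and> density (\<rho>B j))"
      "(\<Sum>j<m. r j) = 1" "\<rho>S = (\<Sum>j<m. r j *\<^sub>R kron (\<rho>A j) (\<rho>B j))"
    and basisA: "eigenbasis UA nAi PAi" and basisB: "eigenbasis UB nBi PBi"
    and athA: "\<forall>j<m. weight_athermality (gibbs \<beta> nAi EAi PAi) (\<rho>A j) (aA j) (\<tau>A j)"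
    and athB: "\<forall>j<m. weight_athermality (gibbs \<beta> nBi EBi PBi) (\<rho>B j) (aB j) (\<tau>B j)"
    and cohA: "\<forall>j<m. weight_coherence UA (\<tau>A j) (cA j) (\<tau>Ad j) (\<tau>Ac j)"
    and cohB: "\<forall>j<m. weight_coherence UB (\<tau>B j) (cB j) (\<tau>Bd j) (\<tau>Bc j)"
  shows
   "let \<gamma>Ai = gibbs \<beta> nAi EAi PAi; \<gamma>Bi = gibbs \<beta> nBi EBi PBi;
        \<gamma>i = kron \<gamma>Ai \<gamma>Bi;
        \<gamma>f = kron (gibbs \<beta> nAf EAf PAf) (gibbs \<beta> nBf EBf PBf);
        \<Delta>F = - (1 / \<beta>) * ln (partition \<beta> nAf EAf PAf * partition \<beta> nBf EBf PBf /
                               (partition \<beta> nAi EAi PAi * partition \<beta> nBi EBi PBi));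
        d = real CARD('a \<times> 'b);
        \<rho>d = (\<lambda>j. ((1 - aA j) * aB j * (1 - cB j)) *\<^sub>R kron \<gamma>Ai (\<tau>Bd j)
                 + (aA j * (1 - cA j) * (1 - aB j)) *\<^sub>R kron (\<tau>Ad j) \<gamma>Bi
                 + (aA j * (1 - cA j) * aB j * (1 - cB j)) *\<^sub>R kron (\<tau>Ad j) (\<tau>Bd j));
        \<rho>c = (\<lambda>j. ((1 - aA j) * aB j * cB j) *\<^sub>R kron \<gamma>Ai (\<tau>Bc j)
                 + (aA j * cA j * (1 - aB j)) *\<^sub>R kron (\<tau>Ac j) \<gamma>Bi
                 + (aA j * (1 - cA j) * aB j * cB j) *\<^sub>R kron (\<tau>Ad j) (\<tau>Bc j)
                 + (aA j * cA j * aB j * (1 - cB j)) *\<^sub>R kron (\<tau>Ac j) (\<tau>Bd j)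
                 + (aA j * cA j * aB j * cB j) *\<^sub>R kron (\<tau>Ac j) (\<tau>Bc j));
        Ji = complex_of_real lam * trace (matrix_inv \<gamma>i ** \<rho>E)
             + complex_of_real (1 - lam) *
               (\<Sum>j<m. complex_of_real (r j) *
                  (complex_of_real ((1 - aA j) * (1 - aB j) * d)
                   + trace (matrix_inv \<gamma>i ** \<rho>d j) + trace (matrix_inv \<gamma>i ** \<rho>c j)));
        Jf = complex_of_real lam * trace (\<gamma>f ** \<Phi> \<rho>E)
             + complex_of_real (1 - lam) *
               (\<Sum>j<m. complex_of_real (r j) *
                  (complex_of_real ((1 - aA j) * (1 - aB j)) * trace (\<gamma>f ** \<Phi> \<gamma>i)
                   + trace (\<gamma>f ** \<Phi> (\<rho>d j)) + trace (\<gamma>f ** \<Phi> (\<rho>c j))))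
    in epm_avg \<rho>i \<Phi> nAi EAi PAi nBi EBi PBi nAf EAf PAf nBf EBf PBf
         (\<lambda>x. exp (- \<beta> * (x - \<Delta>F))) = Ji * Jf"
  unfolding Let_def
proof (rule epm_avg_exp_mixture[where w = "\<lambda>j. (1 - aA j) * (1 - aB j)" and \<sigma> = "\<lambda>j. kron (\<rho>A j) (\<rho>B j)"])
  show "\<beta> \<noteq> 0" using beta_pos by simp
  show "linear \<Phi>" using channel by (rule cptp_linear)
  show "\<rho>i = lam *\<^sub>R \<rho>E + (1 - lam) *\<^sub>R (\<Sum>j<m. r j *\<^sub>R kron (\<rho>A j) (\<rho>B j))"
    using BSA sep_decomp(3) by (simp add: is_BSA_def)
qed (use specAi specBi specAf specBf athA athB cohA cohB in
      \<open>auto simp: weight_athermality_def weight_coherence_def intro!: kron_mixture_expand\<close>)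

end
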